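(* For $n\ge 1$, the subtree number indices of the spiro ortho-chain $O_n$, meta-chain $M_n$ and para-chain $P_n$ with $n$ hexagons are \[ \mathrm{STN}(O_n)=\frac{256(16^{n-1}-1)}{9}+\frac{25(n-1)}{3}+36,\qquad \mathrm{STN}(M_n)=\frac{325(13^{n-1}-1)}{9}+\frac{5(n-1)}{3}+36, \] \[ \mathrm{STN}(P_n)=\frac{4800(12^{n-1}-1)}{121}-\frac{15(n-1)}{11}+36. \]
   Context: For a graph $G$, $\mathrm{STN}(G)$ is the number of nonempty subtrees of $G$ (subgraphs that are trees, single vertices included). A spiro chain with $n$ hexagons consists of hexagons (6-cycles) $H_1,\dots,H_n$ such that $H_i$ and $H_{i+1}$ share exactly one vertex (a cut vertex) for $i=1,\dots,n-1$, non-consecutive hexagons are vertex-disjoint, and the graph is the union of these hexagons. For $2\le i\le n-1$, $H_i$ contains two distinct cut vertices. The spiro ortho-chain $O_n$ (resp. meta-chain $M_n$, para-chain $P_n$) is the spiro chain in which, for every $2\le i\le n-1$, these two cut vertices are at distance $1$ (resp. $2$, $3$) in $H_i$. *)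

theory Defs
  imports Complex_Main
begin

definition is_graph :: "'a set \<Rightarrow> 'a set set \<Rightarrow> bool" where
  "is_graph V E \<longleftrightarrow> finite V \<and> (\<forall>e\<in>E. \<exists>u v. u \<noteq> v \<and> e = {u, v} \<and> u \<in> V \<and> v \<in> V)"

definition connected_graph :: "'a set \<Rightarrow> 'a set set \<Rightarrow> bool" where
  "connected_graph V E \<longleftrightarrow> V \<noteq> {} \<and>
     (\<forall>u\<in>V. \<forall>v\<in>V. (\<lambda>x y. {x, y} \<in> E)\<^sup>*\<^sup>* u v)"

definition has_cycle :: "'a set set \<Rightarrow> bool" where
  "has_cycle E \<longleftrightarrow> (\<exists>vs. length vs \<ge> 3 \<and> distinct vs \<and>
     (\<forall>i. Suc i < length vs \<longrightarrow> {vs ! i, vs ! Suc i} \<in> E) \<and> {last vs, hd vs} \<in> E)"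

definition is_tree :: "'a set \<Rightarrow> 'a set set \<Rightarrow> bool" where
  "is_tree V E \<longleftrightarrow> is_graph V E \<and> connected_graph V E \<and> \<not> has_cycle E"

definition subtrees :: "'a set \<Rightarrow> 'a set set \<Rightarrow> ('a set \<times> 'a set set) set" where
  "subtrees V E = {(V', E'). V' \<subseteq> V \<and> E' \<subseteq> E \<and> is_tree V' E'}"

definition STN :: "'a set \<Rightarrow> 'a set set \<Rightarrow> nat" where
  "STN V E = card (subtrees V E)"

text \<open>Spiro chain with n hexagons where, in each hexagon, the next cut vertex lies at
  distance d (d = 1 ortho, d = 2 meta, d = 3 para) from the previous one along the hexagon. Hexagon i (i < n) is the 6-cycle
  entry_i, 5i+1, 5i+2, 5i+3, 5i+4, 5i+5 (back to entry_i), where entry_0 = 0 and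
  entry_(i+1) = 5i+d is the vertex of hexagon i at distance d from entry_i.\<close>

fun spiro_entry :: "nat \<Rightarrow> nat \<Rightarrow> nat" where
  "spiro_entry d 0 = 0"
| "spiro_entry d (Suc i) = 5 * i + d"

definition hexagon :: "nat \<Rightarrow> nat \<Rightarrow> nat list" where
  "hexagon d i = [spiro_entry d i, 5*i+1, 5*i+2, 5*i+3, 5*i+4, 5*i+5]"

definition cycle_edges :: "'a list \<Rightarrow> 'a set set" where
  "cycle_edges vs = {{vs ! k, vs ! ((k + 1) mod length vs)} | k. k < length vs}"

definition spiro_V :: "nat \<Rightarrow> nat set" where
  "spiro_V n = {0..5*n}"

definition spiro_E :: "nat \<Rightarrow> nat \<Rightarrow> nat set set" where
  "spiro_E d n = (\<Union>i<n. cycle_edges (hexagon d i))"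

end

(*
  A subtree of a graph glued from two graphs G1 and G2 at a single common vertex c either avoids c,
  and then is a subtree of G1 or of G2, or contains c, and then is the union of a subtree of G1 and
  a subtree of G2 that both contain c. A spiro chain is built by gluing one hexagon at a time at
  the current cut vertex. Of the 36 subtrees of a hexagon, 21 contain a given vertex, 15 avoid it,
  and 16, 13 or 12 contain two given vertices at distance 1, 2 or 3; these numbers are found by
  running through the 64 edge sets of the hexagon. Writing a k for the number of subtrees of the
  chain with k hexagons and f k for the number of those that contain its last cut vertex, one gets
  a (k + 1) = a k + 15 + 20 f k and f (k + 1) = 21 - g + g f k with g = 16, 13, 12, linear
  recurrences whose solutions are the stated closed forms.
*)
theory Submission
  imports Defs
begin

abbreviation adj :: "'a set set \<Rightarrow> 'a \<Rightarrow> 'a \<Rightarrow> bool" where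
  "adj E x y \<equiv> {x, y} \<in> E"

lemma is_graph_edge:
  "is_graph V E \<Longrightarrow> e \<in> E \<Longrightarrow> \<exists>u v. u \<noteq> v \<and> e = {u, v} \<and> u \<in> V \<and> v \<in> V"
  by (simp add: is_graph_def)

lemma is_graph_edge_subset: "is_graph V E \<Longrightarrow> e \<in> E \<Longrightarrow> e \<subseteq> V"
  unfolding is_graph_def by fastforce

lemma is_graph_finite_edges: "is_graph V E \<Longrightarrow> finite E"
  using is_graph_edge_subset finite_subset[of E "Pow V"] by (auto simp: is_graph_def)

lemma is_graph_Un: "is_graph V1 E1 \<Longrightarrow> is_graph V2 E2 \<Longrightarrow> is_graph (V1 \<union> V2) (E1 \<union> E2)"
  unfolding is_graph_def by (metis Un_iff finite_Un)

lemma is_graph_Int: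
  assumes "is_graph A B" and "is_graph V E"
  shows "is_graph (A \<inter> V) (B \<inter> E)"
  unfolding is_graph_def
proof (intro conjI ballI)
  show "finite (A \<inter> V)" using assms(1) by (simp add: is_graph_def)
  fix e assume e: "e \<in> B \<inter> E"
  then obtain u v where "u \<noteq> v" "e = {u, v}" "u \<in> A" "v \<in> A" using is_graph_edge[OF assms(1)] by blast
  moreover have "e \<subseteq> V" using e is_graph_edge_subset[OF assms(2)] by blast
  ultimately show "\<exists>u v. u \<noteq> v \<and> e = {u, v} \<and> u \<in> A \<inter> V \<and> v \<in> A \<inter> V" by blast
qed

lemma is_graph_Union:
  assumes g: "is_graph V E" and "B \<subseteq> E"
  shows "is_graph (\<Union>B) B"
  unfolding is_graph_def
proof (intro conjI ballI)
  have "\<Union>B \<subseteq> V" using \<open>B \<subseteq> E\<close> is_graph_edge_subset[OF g] by blast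
  then show "finite (\<Union>B)" using g finite_subset by (auto simp: is_graph_def)
  fix e assume "e \<in> B"
  then obtain u v where "u \<noteq> v" "e = {u, v}" using is_graph_edge[OF g] \<open>B \<subseteq> E\<close> by blast
  with \<open>e \<in> B\<close> show "\<exists>u v. u \<noteq> v \<and> e = {u, v} \<and> u \<in> \<Union>B \<and> v \<in> \<Union>B" by blast
qed

lemma is_tree_nonempty: "is_tree V E \<Longrightarrow> V \<noteq> {}"
  by (simp add: is_tree_def connected_graph_def)

lemma adj_rtranclp_sym: "(adj E)\<^sup>*\<^sup>* u v \<Longrightarrow> (adj E)\<^sup>*\<^sup>* v u"
proof (induction rule: rtranclp_induct)
  case (step y z)
  then have "adj E z y" by (simp add: insert_commute)
  then show ?case using step.IH by (rule converse_rtranclp_into_rtranclp)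
qed simp

lemma adj_rtranclp_mono: "(adj E)\<^sup>*\<^sup>* u v \<Longrightarrow> E \<subseteq> F \<Longrightarrow> (adj F)\<^sup>*\<^sup>* u v"
  by (induction rule: rtranclp_induct) (auto intro: rtranclp.rtrancl_into_rtrancl)

lemma adj_rtranclp_in_graph: "(adj E)\<^sup>*\<^sup>* u v \<Longrightarrow> is_graph V E \<Longrightarrow> v = u \<or> v \<in> V"
  by (induction rule: rtranclp_induct) (auto dest: is_graph_edge_subset)

lemma connected_graphD: "connected_graph V E \<Longrightarrow> u \<in> V \<Longrightarrow> v \<in> V \<Longrightarrow> (adj E)\<^sup>*\<^sup>* u v"
  by (simp add: connected_graph_def)

lemma connected_graphI_hub:
  assumes "c \<in> V" and "\<And>u. u \<in> V \<Longrightarrow> (adj E)\<^sup>*\<^sup>* u c"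
  shows "connected_graph V E"
  unfolding connected_graph_def
  using assms by (blast intro: rtranclp_trans adj_rtranclp_sym)

lemma has_cycle_mono: "has_cycle E \<Longrightarrow> E \<subseteq> F \<Longrightarrow> has_cycle F"
  unfolding has_cycle_def by blast

lemma has_cycle_iff_mod:
  "has_cycle E \<longleftrightarrow> (\<exists>vs. length vs \<ge> 3 \<and> distinct vs \<and>
     (\<forall>i<length vs. {vs ! i, vs ! (Suc i mod length vs)} \<in> E))"
proof -
  have "(\<forall>i<length vs. {vs ! i, vs ! (Suc i mod length vs)} \<in> E) \<longleftrightarrow>
        (\<forall>i. Suc i < length vs \<longrightarrow> {vs ! i, vs ! Suc i} \<in> E) \<and> {last vs, hd vs} \<in> E"
    if len: "length vs \<ge> 3" for vs :: "'a list"
  proof -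
    obtain L where L: "length vs = Suc L" using len by (cases "length vs") auto
    then have "vs \<noteq> []" by auto
    then have "last vs = vs ! L" "hd vs = vs ! 0" by (simp_all add: last_conv_nth hd_conv_nth L)
    moreover have "(\<forall>i<Suc L. {vs ! i, vs ! (Suc i mod Suc L)} \<in> E) \<longleftrightarrow>
          (\<forall>i<L. {vs ! i, vs ! Suc i} \<in> E) \<and> {vs ! L, vs ! 0} \<in> E"
      unfolding All_less_Suc by auto
    ultimately show ?thesis unfolding L by simp
  qed
  then show ?thesis
    unfolding has_cycle_def by (intro ex_cong1) (metis (no_types, lifting))
qed

lemma cyclic_induct:
  assumes "p < L" and "P p"
    and step: "\<And>i. i < L \<Longrightarrow> Suc i mod L \<noteq> p \<Longrightarrow> P i \<Longrightarrow> P (Suc i mod L)"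
    and "i < L"
  shows "P i"
proof -
  have "P ((p + m) mod L)" if "m < L" for m
    using that
  proof (induction m)
    case 0
    then show ?case using assms(1,2) by simp
  next
    case (Suc m)
    have "(p + Suc m) mod L \<noteq> p"
    proof (cases "p + Suc m < L")
      case False
      then have "(p + Suc m) mod L = p + Suc m - L"
        using Suc.prems assms(1) by (simp add: le_mod_geq)
      then show ?thesis using Suc.prems False by arith
    qed simp
    moreover have "(p + Suc m) mod L = Suc ((p + m) mod L) mod L"
      by (simp add: mod_Suc_eq)
    ultimately show ?case using Suc step[of "(p + m) mod L"] assms(1) by simp
  qed
  moreover define m where "m = (if p \<le> i then i - p else i + L - p)"
  then have "m < L" "(p + m) mod L = i" using assms(1,4) by auto
  ultimately show ?thesis by metis
qed

lemma distinct_at_most_one_position: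
  assumes "distinct vs" and "vs \<noteq> []"
  obtains p where "p < length vs" and "\<And>j. j < length vs \<Longrightarrow> j \<noteq> p \<Longrightarrow> vs ! j \<noteq> c"
proof (cases "c \<in> set vs")
  case True
  then obtain p where "p < length vs" "vs ! p = c" by (metis in_set_conv_nth)
  with assms(1) show ?thesis using that by (metis nth_eq_iff_index_eq)
next
  case False
  with assms(2) show ?thesis using that[of 0] by (metis nth_mem length_greater_0_conv)
qed

lemma has_cycle_Un_cut_vertex:
  assumes g1: "is_graph V1 E1" and g2: "is_graph V2 E2" and cut: "V1 \<inter> V2 \<subseteq> {c}"
    and "has_cycle (E1 \<union> E2)"
  shows "has_cycle E1 \<or> has_cycle E2"
proof -
  obtain vs where vs: "length vs \<ge> 3" "distinct vs"
    and edges: "\<forall>i<length vs. {vs ! i, vs ! (Suc i mod length vs)} \<in> E1 \<union> E2"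
    using assms(4) unfolding has_cycle_iff_mod by blast
  define L where "L = length vs"
  define ed where "ed i = {vs ! i, vs ! (Suc i mod L)}" for i
  have ed_in: "ed i \<in> E1 \<union> E2" if "i < L" for i
    using edges that unfolding ed_def L_def by blast
  have "vs \<noteq> []" using vs(1) by auto
  then obtain p where p: "p < L" and not_cut: "\<And>j. j < L \<Longrightarrow> j \<noteq> p \<Longrightarrow> vs ! j \<noteq> c"
    unfolding L_def by (rule distinct_at_most_one_position[OF vs(2), where c = c]) blast
  \<comment> \<open>Consecutive edges of the cycle share a vertex different from c, unless it sits at position p;
     hence they lie on the same side.\<close>
  have same_side: "ed i \<in> E1 \<longleftrightarrow> ed (Suc i mod L) \<in> E1"
    if i: "i < L" and j: "Suc i mod L \<noteq> p" for i
  proof -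
    let ?j = "Suc i mod L"
    have "?j < L" using p by simp
    then have "vs ! ?j \<noteq> c" using not_cut j by blast
    moreover have "vs ! ?j \<in> ed i" "vs ! ?j \<in> ed ?j" unfolding ed_def by auto
    ultimately have "\<not> (ed i \<in> E1 \<and> ed ?j \<in> E2)" "\<not> (ed i \<in> E2 \<and> ed ?j \<in> E1)"
      using cut is_graph_edge_subset[OF g1] is_graph_edge_subset[OF g2] by blast+
    then show ?thesis using ed_in[OF i] ed_in[OF \<open>?j < L\<close>] by blast
  qed
  have all_same: "ed i \<in> E1 \<longleftrightarrow> ed p \<in> E1" if "i < L" for i
    by (rule cyclic_induct[of p L "\<lambda>i. ed i \<in> E1 \<longleftrightarrow> ed p \<in> E1"])
      (use p same_side that in blast)+
  have cycle_in: "has_cycle F" if "\<forall>i<L. ed i \<in> F" for F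
    unfolding has_cycle_iff_mod using vs that unfolding ed_def L_def by blast
  show ?thesis
  proof (cases "ed p \<in> E1")
    case True
    then show ?thesis using all_same cycle_in by blast
  next
    case False
    then show ?thesis using all_same ed_in cycle_in by blast
  qed
qed

lemma mem_subtrees_iff:
  "T \<in> subtrees V E \<longleftrightarrow> fst T \<subseteq> V \<and> snd T \<subseteq> E \<and> is_tree (fst T) (snd T)"
  by (cases T) (simp add: subtrees_def)

lemma finite_subtrees: "is_graph V E \<Longrightarrow> finite (subtrees V E)"
  using is_graph_finite_edges[of V E] finite_subset[of "subtrees V E" "Pow V \<times> Pow E"]
  by (auto simp: subtrees_def is_graph_def)

lemma is_tree_connected: "is_tree A B \<Longrightarrow> u \<in> A \<Longrightarrow> v \<in> A \<Longrightarrow> (adj B)\<^sup>*\<^sup>* u v"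
  by (simp add: is_tree_def connected_graph_def)

definition STN_through :: "'a set \<Rightarrow> 'a set set \<Rightarrow> 'a set \<Rightarrow> nat" where
  "STN_through V E S = card {T \<in> subtrees V E. S \<subseteq> fst T}"

lemma STN_through_empty: "STN_through V E {} = STN V E"
  by (simp add: STN_through_def STN_def)

lemma STN_through_singleton: "STN_through V E {x} = card {T \<in> subtrees V E. x \<in> fst T}"
  by (simp add: STN_through_def)

lemma STN_through_doubleton:
  "STN_through V E {x, y} = card {T \<in> subtrees V E. x \<in> fst T \<and> y \<in> fst T}"
  by (simp add: STN_through_def)

lemma card_filter_partition:
  "finite A \<Longrightarrow> card {x \<in> A. P x \<and> Q x} + card {x \<in> A. \<not> P x \<and> Q x} = card {x \<in> A. Q x}"
  by (subst card_Un_disjoint[symmetric]) (auto intro: arg_cong[where f = card])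

lemma Collect_mem_Un_image:
  "{x \<in> A \<union> B \<union> f ` C. P x} = {x \<in> A. P x} \<union> {x \<in> B. P x} \<union> f ` {y \<in> C. P (f y)}"
  by blast

definition subgraph_Un ::
  "'a set \<times> 'a set set \<Rightarrow> 'a set \<times> 'a set set \<Rightarrow> 'a set \<times> 'a set set" where
  "subgraph_Un T1 T2 = (fst T1 \<union> fst T2, snd T1 \<union> snd T2)"

lemma subgraph_Un_commute: "subgraph_Un T1 T2 = subgraph_Un T2 T1"
  by (simp add: subgraph_Un_def Un_commute)

section \<open>Gluing two graphs at a cut vertex\<close>

locale one_vertex_union =
  fixes V1 :: "'a set" and E1 :: "'a set set" and V2 :: "'a set" and E2 :: "'a set set" and c :: 'a
  assumes graph1: "is_graph V1 E1" and graph2: "is_graph V2 E2" and cut: "V1 \<inter> V2 = {c}"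
begin

lemma swap: "one_vertex_union V2 E2 V1 E1 c"
  using graph1 graph2 cut by unfold_locales blast+

lemma edges_disjoint: "E1 \<inter> E2 = {}"
proof (rule ccontr)
  assume "E1 \<inter> E2 \<noteq> {}"
  then obtain e where e: "e \<in> E1" "e \<in> E2" by blast
  then obtain u v where uv: "u \<noteq> v" "e = {u, v}" using is_graph_edge[OF graph1] by blast
  have "{u, v} \<subseteq> V1 \<inter> V2"
    using is_graph_edge_subset[OF graph1 e(1)] is_graph_edge_subset[OF graph2 e(2)] uv(2) by blast
  then show False using cut uv(1) by auto
qed

lemma subtrees_mono: "subtrees V1 E1 \<subseteq> subtrees (V1 \<union> V2) (E1 \<union> E2)"
  by (auto simp: subtrees_def)

lemma adj_rtranclp_Un_cases:
  assumes F: "F \<subseteq> E1 \<union> E2" and walk: "(adj F)\<^sup>*\<^sup>* u v" and u: "u \<in> V1"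
  shows "(adj (F \<inter> E1))\<^sup>*\<^sup>* u v \<and> v \<in> V1 \<or> (adj (F \<inter> E1))\<^sup>*\<^sup>* u c"
  using walk
proof (induction rule: rtranclp_induct)
  case (step y z)
  show ?case
  proof (cases "(adj (F \<inter> E1))\<^sup>*\<^sup>* u c")
    case avoids_c: False
    with step.IH have uy: "(adj (F \<inter> E1))\<^sup>*\<^sup>* u y" "y \<in> V1" by auto
    show ?thesis
    proof (cases "{y, z} \<in> E1")
      case True
      then have "adj (F \<inter> E1) y z" "z \<in> V1"
        using step.hyps(2) is_graph_edge_subset[OF graph1] by auto
      then show ?thesis using uy(1) by (meson rtranclp.rtrancl_into_rtrancl)
    next
      case False
      then have "y \<in> V2" using step.hyps(2) F is_graph_edge_subset[OF graph2] by blast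
      then have "y = c" using uy(2) cut by blast
      then show ?thesis using uy(1) avoids_c by simp
    qed
  qed simp
qed (use u in simp)

lemma Un_in_subtrees:
  assumes t1: "(A1, B1) \<in> subtrees V1 E1" "c \<in> A1" and t2: "(A2, B2) \<in> subtrees V2 E2" "c \<in> A2"
  shows "(A1 \<union> A2, B1 \<union> B2) \<in> subtrees (V1 \<union> V2) (E1 \<union> E2)"
proof -
  have T1: "A1 \<subseteq> V1" "B1 \<subseteq> E1" "is_tree A1 B1" and T2: "A2 \<subseteq> V2" "B2 \<subseteq> E2" "is_tree A2 B2"
    using t1 t2 by (simp_all add: subtrees_def)
  then have g1: "is_graph A1 B1" and g2: "is_graph A2 B2" by (simp_all add: is_tree_def)
  have "(adj (B1 \<union> B2))\<^sup>*\<^sup>* u c" if "u \<in> A1 \<union> A2" for u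
  proof (cases "u \<in> A1")
    case True
    show ?thesis using adj_rtranclp_mono[OF is_tree_connected[OF T1(3) True t1(2)]] by blast
  next
    case False
    with that have "u \<in> A2" by blast
    show ?thesis using adj_rtranclp_mono[OF is_tree_connected[OF T2(3) \<open>u \<in> A2\<close> t2(2)]] by blast
  qed
  then have "connected_graph (A1 \<union> A2) (B1 \<union> B2)"
    using t1(2) by (intro connected_graphI_hub[of c]) auto
  moreover have "A1 \<inter> A2 \<subseteq> {c}" using T1(1) T2(1) cut by blast
  then have "\<not> has_cycle (B1 \<union> B2)"
    using has_cycle_Un_cut_vertex[OF g1 g2] T1(3) T2(3) by (auto simp: is_tree_def)
  ultimately show ?thesis
    using T1 T2 is_graph_Un[OF g1 g2] by (auto simp: subtrees_def is_tree_def)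
qed

lemma restrict_in_subtrees:
  assumes t: "(A, B) \<in> subtrees (V1 \<union> V2) (E1 \<union> E2)" and "c \<in> A"
  shows "(A \<inter> V1, B \<inter> E1) \<in> subtrees V1 E1"
proof -
  have T: "A \<subseteq> V1 \<union> V2" "B \<subseteq> E1 \<union> E2" "is_tree A B" using t by (simp_all add: subtrees_def)
  have graph: "is_graph (A \<inter> V1) (B \<inter> E1)"
    using T(3) graph1 by (simp add: is_graph_Int is_tree_def)
  have "(adj (B \<inter> E1))\<^sup>*\<^sup>* u c" if "u \<in> A \<inter> V1" for u
    using adj_rtranclp_Un_cases[OF T(2) is_tree_connected[OF T(3) _ \<open>c \<in> A\<close>]] that by blast
  moreover have "c \<in> A \<inter> V1" using \<open>c \<in> A\<close> cut by blast
  ultimately have "connected_graph (A \<inter> V1) (B \<inter> E1)"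
    by (intro connected_graphI_hub[of c]) auto
  moreover have "\<not> has_cycle (B \<inter> E1)"
    using T(3) has_cycle_mono[of "B \<inter> E1" B] by (auto simp: is_tree_def)
  ultimately show ?thesis using graph by (simp add: subtrees_def is_tree_def)
qed

lemma subtree_avoiding_cut_in_side:
  assumes t: "(A, B) \<in> subtrees (V1 \<union> V2) (E1 \<union> E2)" and "c \<notin> A" and u: "u \<in> A" "u \<in> V1"
  shows "(A, B) \<in> subtrees V1 E1"
proof -
  have T: "B \<subseteq> E1 \<union> E2" "is_tree A B" using t by (simp_all add: subtrees_def)
  have g: "is_graph A B" using T(2) by (simp add: is_tree_def)
  have "\<not> (adj (B \<inter> E1))\<^sup>*\<^sup>* u c"
  proof
    assume "(adj (B \<inter> E1))\<^sup>*\<^sup>* u c"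
    then have "(adj B)\<^sup>*\<^sup>* u c" by (rule adj_rtranclp_mono) blast
    then show False using adj_rtranclp_in_graph[OF _ g] \<open>c \<notin> A\<close> u(1) by blast
  qed
  then have AV: "A \<subseteq> V1"
    using adj_rtranclp_Un_cases[OF T(1) is_tree_connected[OF T(2) u(1)] u(2)] by blast
  have "B \<subseteq> E1"
  proof
    fix e assume "e \<in> B"
    then obtain x y where xy: "x \<noteq> y" "e = {x, y}" "x \<in> A" "y \<in> A"
      using is_graph_edge[OF g] by blast
    show "e \<in> E1"
    proof (rule ccontr)
      assume "e \<notin> E1"
      then have "e \<in> E2" using \<open>e \<in> B\<close> T(1) by blast
      then have "{x, y} \<subseteq> V1 \<inter> V2" using is_graph_edge_subset[OF graph2] xy AV by blast
      then show False using cut xy(1) by auto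
    qed
  qed
  then show ?thesis using AV T(2) by (simp add: subtrees_def)
qed

lemma subtrees_Un:
  "subtrees (V1 \<union> V2) (E1 \<union> E2) =
     {T \<in> subtrees V1 E1. c \<notin> fst T} \<union> {T \<in> subtrees V2 E2. c \<notin> fst T} \<union>
     case_prod subgraph_Un ` ({T \<in> subtrees V1 E1. c \<in> fst T} \<times> {T \<in> subtrees V2 E2. c \<in> fst T})"
  (is "?L = ?P1 \<union> ?P2 \<union> ?J")
proof
  interpret swapped: one_vertex_union V2 E2 V1 E1 c by (rule swap)
  show "?L \<subseteq> ?P1 \<union> ?P2 \<union> ?J"
  proof
    fix T assume "T \<in> ?L"
    obtain A B where T: "T = (A, B)" by (cases T)
    with \<open>T \<in> ?L\<close> have t: "(A, B) \<in> ?L" and t': "(A, B) \<in> subtrees (V2 \<union> V1) (E2 \<union> E1)"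
      by (simp_all add: Un_commute)
    have sub: "A \<subseteq> V1 \<union> V2" "B \<subseteq> E1 \<union> E2" "is_tree A B" using t by (simp_all add: subtrees_def)
    show "T \<in> ?P1 \<union> ?P2 \<union> ?J"
    proof (cases "c \<in> A")
      case True
      have "T = subgraph_Un (A \<inter> V1, B \<inter> E1) (A \<inter> V2, B \<inter> E2)"
        using T sub(1,2) unfolding subgraph_Un_def by auto
      moreover have "(A \<inter> V1, B \<inter> E1) \<in> {T \<in> subtrees V1 E1. c \<in> fst T}"
        using restrict_in_subtrees[OF t True] True cut by auto
      moreover have "(A \<inter> V2, B \<inter> E2) \<in> {T \<in> subtrees V2 E2. c \<in> fst T}"
        using swapped.restrict_in_subtrees[OF t' True] True cut by auto
      ultimately show ?thesis by (blast intro: UnI2)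
    next
      case False
      obtain u where "u \<in> A" using sub(3) is_tree_nonempty by blast
      then have "T \<in> subtrees V1 E1 \<or> T \<in> subtrees V2 E2"
        using subtree_avoiding_cut_in_side[OF t False] swapped.subtree_avoiding_cut_in_side[OF t' False]
          sub(1) T by blast
      then show ?thesis using False T by auto
    qed
  qed
  have "?P1 \<subseteq> ?L" "?P2 \<subseteq> ?L"
    using subtrees_mono swapped.subtrees_mono by (auto simp: Un_commute)
  moreover have "?J \<subseteq> ?L"
    using Un_in_subtrees by (auto simp: subgraph_Un_def prod_eq_iff)
  ultimately show "?P1 \<union> ?P2 \<union> ?J \<subseteq> ?L" by blast
qed

lemma subgraph_Un_restrict:
  assumes "T1 \<in> subtrees V1 E1" "c \<in> fst T1" "T2 \<in> subtrees V2 E2"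
  shows "(fst (subgraph_Un T1 T2) \<inter> V1, snd (subgraph_Un T1 T2) \<inter> E1) = T1"
proof -
  have "fst T1 \<subseteq> V1" "snd T1 \<subseteq> E1" "fst T2 \<subseteq> V2" "snd T2 \<subseteq> E2"
    using assms by (simp_all add: mem_subtrees_iff)
  then show ?thesis using cut edges_disjoint \<open>c \<in> fst T1\<close> by (auto simp: subgraph_Un_def prod_eq_iff)
qed

lemma inj_on_subgraph_Un:
  "inj_on (case_prod subgraph_Un) ({T \<in> subtrees V1 E1. c \<in> fst T} \<times> {T \<in> subtrees V2 E2. c \<in> fst T})"
proof (rule inj_onI)
  interpret swapped: one_vertex_union V2 E2 V1 E1 c by (rule swap)
  fix p q
  assume p: "p \<in> {T \<in> subtrees V1 E1. c \<in> fst T} \<times> {T \<in> subtrees V2 E2. c \<in> fst T}"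
    and q: "q \<in> {T \<in> subtrees V1 E1. c \<in> fst T} \<times> {T \<in> subtrees V2 E2. c \<in> fst T}"
    and eq: "case_prod subgraph_Un p = case_prod subgraph_Un q"
  have "fst p = fst q"
    using subgraph_Un_restrict[of "fst p" "snd p"] subgraph_Un_restrict[of "fst q" "snd q"] p q eq
    by (simp add: split_beta mem_Times_iff)
  moreover have "snd p = snd q"
    using swapped.subgraph_Un_restrict[of "snd p" "fst p"] swapped.subgraph_Un_restrict[of "snd q" "fst q"]
      p q eq
    by (simp add: split_beta mem_Times_iff subgraph_Un_commute[of "snd _"])
  ultimately show "p = q" by (simp add: prod_eq_iff)
qed

lemma card_subtrees_Un:
  "card {T \<in> subtrees (V1 \<union> V2) (E1 \<union> E2). Q T} =
     card {T \<in> subtrees V1 E1. c \<notin> fst T \<and> Q T} + card {T \<in> subtrees V2 E2. c \<notin> fst T \<and> Q T} +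
     card {p \<in> {T \<in> subtrees V1 E1. c \<in> fst T} \<times> {T \<in> subtrees V2 E2. c \<in> fst T}.
             Q (case_prod subgraph_Un p)}"
  (is "_ = card ?X1 + card ?X2 + card ?Y")
proof -
  have "{T \<in> subtrees (V1 \<union> V2) (E1 \<union> E2). Q T} = ?X1 \<union> ?X2 \<union> case_prod subgraph_Un ` ?Y"
    unfolding subtrees_Un Collect_mem_Un_image by (simp only: mem_Collect_eq conj_assoc)
  moreover have "finite ?X1" "finite ?X2" "finite ?Y"
    using finite_subtrees[OF graph1] finite_subtrees[OF graph2]
    by (auto intro: finite_subset[of ?Y "subtrees V1 E1 \<times> subtrees V2 E2"])
  moreover have "?X1 \<inter> ?X2 = {}"
  proof -
    have "fst T \<subseteq> {c}" "fst T \<noteq> {}" "c \<notin> fst T" if "T \<in> ?X1" "T \<in> ?X2" for T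
      using that cut is_tree_nonempty[of "fst T" "snd T"] unfolding mem_subtrees_iff by auto
    then show ?thesis by blast
  qed
  moreover have "c \<in> fst (case_prod subgraph_Un p)" if "p \<in> ?Y" for p
    using that by (auto simp: subgraph_Un_def)
  then have "(?X1 \<union> ?X2) \<inter> case_prod subgraph_Un ` ?Y = {}" by blast
  moreover have "inj_on (case_prod subgraph_Un) ?Y"
    using inj_on_subgraph_Un by (rule inj_on_subset) blast
  ultimately show ?thesis by (simp add: card_Un_disjoint card_image)
qed

lemma STN_Un:
  "STN (V1 \<union> V2) (E1 \<union> E2) + STN_through V1 E1 {c} + STN_through V2 E2 {c} =
     STN V1 E1 + STN V2 E2 + STN_through V1 E1 {c} * STN_through V2 E2 {c}"
proof -
  have partition: "card {T \<in> subtrees V E. c \<notin> fst T \<and> True} + STN_through V E {c} = STN V E"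
    if "is_graph V E" for V E
    using card_filter_partition[OF finite_subtrees[OF that], of "\<lambda>T. c \<notin> fst T" "\<lambda>_. True"]
    by (simp add: STN_def STN_through_singleton)
  show ?thesis
    using card_subtrees_Un[of "\<lambda>_. True"] partition[OF graph1] partition[OF graph2]
    by (simp add: STN_def STN_through_singleton card_cartesian_product)
qed

lemma STN_through_Un:
  assumes "x \<in> V2" "x \<noteq> c"
  shows "STN_through (V1 \<union> V2) (E1 \<union> E2) {x} + STN_through V2 E2 {c, x} =
     STN_through V2 E2 {x} + STN_through V1 E1 {c} * STN_through V2 E2 {c, x}"
proof -
  let ?C1 = "{T \<in> subtrees V1 E1. c \<in> fst T}" and ?C2 = "{T \<in> subtrees V2 E2. c \<in> fst T}"
  have "x \<notin> V1" using assms cut by blast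
  then have not_x: "x \<notin> fst T" if "T \<in> subtrees V1 E1" for T
    using that by (auto simp: mem_subtrees_iff)
  then have side1: "{T \<in> subtrees V1 E1. c \<notin> fst T \<and> x \<in> fst T} = {}" by blast
  have joined: "{p \<in> ?C1 \<times> ?C2. x \<in> fst (case_prod subgraph_Un p)} =
      ?C1 \<times> {T \<in> subtrees V2 E2. c \<in> fst T \<and> x \<in> fst T}"
    using not_x by (auto simp: subgraph_Un_def)
  have "STN_through (V1 \<union> V2) (E1 \<union> E2) {x} =
      card {T \<in> subtrees V2 E2. c \<notin> fst T \<and> x \<in> fst T} +
      STN_through V1 E1 {c} * STN_through V2 E2 {c, x}"
    using card_subtrees_Un[of "\<lambda>T. x \<in> fst T"] unfolding side1 joined
    by (simp add: STN_through_singleton STN_through_doubleton card_cartesian_product)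
  moreover have "STN_through V2 E2 {c, x} + card {T \<in> subtrees V2 E2. c \<notin> fst T \<and> x \<in> fst T} =
      STN_through V2 E2 {x}"
    using card_filter_partition[OF finite_subtrees[OF graph2]]
    by (simp add: STN_through_singleton STN_through_doubleton)
  ultimately show ?thesis by simp
qed

end

section \<open>Relabelling the vertices\<close>

definition subgraph_image :: "('a \<Rightarrow> 'b) \<Rightarrow> 'a set \<times> 'a set set \<Rightarrow> 'b set \<times> 'b set set" where
  "subgraph_image f T = (f ` fst T, (`) f ` snd T)"

lemma adj_rtranclp_image: "(adj E)\<^sup>*\<^sup>* u v \<Longrightarrow> (adj ((`) f ` E))\<^sup>*\<^sup>* (f u) (f v)"
proof (induction rule: rtranclp_induct)
  case (step y z)
  then have "adj ((`) f ` E) (f y) (f z)" using imageI[of "{y, z}" E "(`) f"] by simp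
  with step.IH show ?case by (rule rtranclp.rtrancl_into_rtrancl)
qed simp

lemma has_cycle_imageD:
  assumes inj: "inj_on f A" and g: "is_graph A B" and "has_cycle ((`) f ` B)"
  shows "has_cycle B"
proof -
  obtain ws where ws: "length ws \<ge> 3" "distinct ws"
    and edges: "\<forall>i<length ws. {ws ! i, ws ! (Suc i mod length ws)} \<in> (`) f ` B"
    using assms(3) unfolding has_cycle_iff_mod by blast
  let ?g = "inv_into A f" and ?L = "length ws"
  have preimage: "\<exists>e\<in>B. {ws ! i, ws ! (Suc i mod ?L)} = f ` e \<and> e \<subseteq> A" if "i < ?L" for i
  proof -
    obtain e where "e \<in> B" "{ws ! i, ws ! (Suc i mod ?L)} = f ` e"
      using edges \<open>i < ?L\<close> by (meson imageE)
    then show ?thesis using is_graph_edge_subset[OF g] by blast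
  qed
  have "set ws \<subseteq> f ` A"
  proof
    fix x assume "x \<in> set ws"
    then obtain i where "i < ?L" "x = ws ! i" by (auto simp: in_set_conv_nth)
    with preimage show "x \<in> f ` A" by blast
  qed
  then have "distinct (map ?g ws)"
    using ws(2) inj_on_inv_into by (simp add: distinct_map)
  moreover have "{map ?g ws ! i, map ?g ws ! (Suc i mod ?L)} \<in> B" if i: "i < ?L" for i
  proof -
    obtain e where e: "e \<in> B" "{ws ! i, ws ! (Suc i mod ?L)} = f ` e" "e \<subseteq> A"
      using preimage[OF i] by blast
    have "Suc i mod ?L < ?L" using ws(1) by (intro mod_less_divisor) linarith
    then have "{map ?g ws ! i, map ?g ws ! (Suc i mod ?L)} = ?g ` f ` e"
      using i e(2) by (metis image_empty image_insert nth_map)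
    also have "\<dots> = e" using inv_into_image_cancel[OF inj e(3)] .
    finally show ?thesis using e(1) by simp
  qed
  ultimately show ?thesis
    unfolding has_cycle_iff_mod using ws(1) by (intro exI[of _ "map ?g ws"]) simp
qed

lemma is_tree_image:
  assumes inj: "inj_on f V" and "A \<subseteq> V" and tree: "is_tree A B"
  shows "is_tree (f ` A) ((`) f ` B)"
proof -
  have injA: "inj_on f A" using inj \<open>A \<subseteq> V\<close> by (rule inj_on_subset)
  have g: "is_graph A B" and conn: "connected_graph A B" and acyclic: "\<not> has_cycle B"
    using tree by (simp_all add: is_tree_def)
  have "is_graph (f ` A) ((`) f ` B)"
    unfolding is_graph_def
  proof (intro conjI ballI)
    show "finite (f ` A)" using g by (simp add: is_graph_def)
    fix e' assume "e' \<in> (`) f ` B"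
    then obtain e where "e \<in> B" "e' = f ` e" by blast
    moreover obtain u v where "u \<noteq> v" "e = {u, v}" "u \<in> A" "v \<in> A"
      using is_graph_edge[OF g \<open>e \<in> B\<close>] by blast
    ultimately show "\<exists>u v. u \<noteq> v \<and> e' = {u, v} \<and> u \<in> f ` A \<and> v \<in> f ` A"
      using inj_on_contraD[OF injA] by auto
  qed
  moreover have "connected_graph (f ` A) ((`) f ` B)"
    using conn unfolding connected_graph_def by (auto intro: adj_rtranclp_image)
  moreover have "\<not> has_cycle ((`) f ` B)"
    using has_cycle_imageD[OF injA g] acyclic by blast
  ultimately show ?thesis by (simp add: is_tree_def)
qed

lemma subgraph_image_in_subtrees:
  assumes "inj_on f V" and "T \<in> subtrees V E"
  shows "subgraph_image f T \<in> subtrees (f ` V) ((`) f ` E)"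
proof -
  have "fst T \<subseteq> V" "snd T \<subseteq> E" "is_tree (fst T) (snd T)"
    using assms(2) by (simp_all add: mem_subtrees_iff)
  then show ?thesis
    using is_tree_image[OF assms(1)] by (simp add: mem_subtrees_iff subgraph_image_def image_mono)
qed

lemma subgraph_image_inv_into:
  assumes "inj_on f V" and "fst T \<subseteq> V" and "\<Union>(snd T) \<subseteq> V"
  shows "subgraph_image (inv_into V f) (subgraph_image f T) = T"
proof -
  have "inv_into V f ` f ` e = e" if "e \<in> snd T" for e
  proof -
    have "e \<subseteq> V" using assms(3) that by blast
    then show ?thesis by (rule inv_into_image_cancel[OF assms(1)])
  qed
  then have "(\<lambda>e. inv_into V f ` f ` e) ` snd T = snd T" by simp
  then show ?thesis
    using inv_into_image_cancel[OF assms(1,2)] by (simp add: subgraph_image_def image_image prod_eq_iff)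
qed

lemma subgraph_image_image_inv_into:
  assumes "fst T \<subseteq> f ` V" and "\<Union>(snd T) \<subseteq> f ` V"
  shows "subgraph_image f (subgraph_image (inv_into V f) T) = T"
proof -
  have "f ` inv_into V f ` e = e" if "e \<in> snd T" for e
  proof -
    have "e \<subseteq> f ` V" using assms(2) that by blast
    then show ?thesis by (rule image_inv_into_cancel[OF refl])
  qed
  then have "(\<lambda>e. f ` inv_into V f ` e) ` snd T = snd T" by simp
  then show ?thesis
    using image_inv_into_cancel[OF refl assms(1)] by (simp add: subgraph_image_def image_image prod_eq_iff)
qed

lemma subtrees_image:
  assumes inj: "inj_on f V" and g: "is_graph V E"
  shows "subtrees (f ` V) ((`) f ` E) = subgraph_image f ` subtrees V E"
proof
  show "subgraph_image f ` subtrees V E \<subseteq> subtrees (f ` V) ((`) f ` E)"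
    using subgraph_image_in_subtrees[OF inj] by blast
  show "subtrees (f ` V) ((`) f ` E) \<subseteq> subgraph_image f ` subtrees V E"
  proof
    fix T assume T: "T \<in> subtrees (f ` V) ((`) f ` E)"
    let ?g = "inv_into V f"
    have "\<Union>E \<subseteq> V" using is_graph_edge_subset[OF g] by blast
    then have V: "?g ` f ` V = V" and E: "(`) ?g ` (`) f ` E = E"
      using subgraph_image_inv_into[OF inj, of "(V, E)"] by (simp_all add: subgraph_image_def)
    have "inj_on ?g (f ` V)" by (rule inj_on_inv_into) (rule subset_refl)
    then have "subgraph_image ?g T \<in> subtrees (?g ` f ` V) ((`) ?g ` (`) f ` E)"
      using T by (rule subgraph_image_in_subtrees)
    then have "subgraph_image ?g T \<in> subtrees V E" unfolding V E .
    moreover have "fst T \<subseteq> f ` V" "snd T \<subseteq> (`) f ` E" using T by (simp_all add: mem_subtrees_iff)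
    then have "fst T \<subseteq> f ` V" "\<Union>(snd T) \<subseteq> f ` V"
      using Union_mono[of "snd T" "(`) f ` E"] image_mono[OF \<open>\<Union>E \<subseteq> V\<close>, of f]
      by (simp_all add: image_Union[symmetric])
    then have "T = subgraph_image f (subgraph_image ?g T)"
      by (rule subgraph_image_image_inv_into[symmetric])
    ultimately show "T \<in> subgraph_image f ` subtrees V E" by (rule rev_image_eqI)
  qed
qed

lemma inj_on_subgraph_image:
  assumes "inj_on f V"
  shows "inj_on (subgraph_image f) (subtrees V E)"
proof (rule inj_onI)
  have within: "fst T \<subseteq> V \<and> snd T \<subseteq> Pow V" if "T \<in> subtrees V E" for T
  proof -
    have "fst T \<subseteq> V" "is_graph (fst T) (snd T)"
      using that by (simp_all add: mem_subtrees_iff is_tree_def)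
    then show ?thesis using is_graph_edge_subset by blast
  qed
  fix T T' assume "T \<in> subtrees V E" "T' \<in> subtrees V E" and eq: "subgraph_image f T = subgraph_image f T'"
  with within have "fst T = fst T'" "snd T = snd T'"
    using inj_on_image_eq_iff[OF assms] inj_on_image_eq_iff[OF inj_on_image_Pow[OF assms]]
    by (simp_all add: subgraph_image_def)
  then show "T = T'" by (simp add: prod_eq_iff)
qed

lemma STN_through_image:
  assumes inj: "inj_on f V" and g: "is_graph V E" and "S \<subseteq> V"
  shows "STN_through (f ` V) ((`) f ` E) (f ` S) = STN_through V E S"
proof -
  have "f ` S \<subseteq> f ` fst T \<longleftrightarrow> S \<subseteq> fst T" if "T \<in> subtrees V E" for T
  proof -
    have "fst T \<subseteq> V" using that by (simp add: mem_subtrees_iff)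
    have "f ` S \<subseteq> f ` fst T \<longleftrightarrow> f ` (S \<union> fst T) = f ` fst T" by (simp add: image_Un subset_Un_eq)
    also have "\<dots> \<longleftrightarrow> S \<union> fst T = fst T"
      using inj_on_image_eq_iff[OF inj] \<open>S \<subseteq> V\<close> \<open>fst T \<subseteq> V\<close> by (meson le_sup_iff order_refl)
    finally show ?thesis by (simp add: subset_Un_eq)
  qed
  then have "{T \<in> subtrees V E. f ` S \<subseteq> fst (subgraph_image f T)} = {T \<in> subtrees V E. S \<subseteq> fst T}"
    by (auto simp: subgraph_image_def)
  moreover have "{T \<in> subtrees (f ` V) ((`) f ` E). f ` S \<subseteq> fst T} =
      subgraph_image f ` {T \<in> subtrees V E. f ` S \<subseteq> fst (subgraph_image f T)}"
    unfolding subtrees_image[OF inj g] by blast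
  moreover have "inj_on (subgraph_image f) {T \<in> subtrees V E. S \<subseteq> fst T}"
    using inj_on_subgraph_image[OF inj] by (rule inj_on_subset) blast
  ultimately show ?thesis by (simp add: STN_through_def card_image)
qed

section \<open>Subtrees determined by their edges\<close>

lemma is_tree_singleton: "is_tree {v} {}"
  by (simp add: is_tree_def is_graph_def connected_graph_def has_cycle_def)

lemma is_tree_without_edges: "is_tree A {} \<Longrightarrow> \<exists>v. A = {v}"
proof -
  assume tree: "is_tree A {}"
  then obtain v where "v \<in> A" using is_tree_nonempty by blast
  moreover have "w = v" if "w \<in> A" for w
    using is_tree_connected[OF tree \<open>v \<in> A\<close> that] by (auto elim: converse_rtranclpE)
  ultimately show ?thesis by blast
qed

lemma is_tree_vertices_eq_Union:
  assumes tree: "is_tree A B" and "B \<noteq> {}"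
  shows "A = \<Union>B"
proof
  have g: "is_graph A B" using tree by (simp add: is_tree_def)
  then show "\<Union>B \<subseteq> A" using is_graph_edge_subset by blast
  show "A \<subseteq> \<Union>B"
  proof
    fix a assume "a \<in> A"
    obtain e where "e \<in> B" using \<open>B \<noteq> {}\<close> by blast
    then obtain x y where e: "e = {x, y}" "x \<in> A" using is_graph_edge[OF g] by blast
    from is_tree_connected[OF tree \<open>a \<in> A\<close> \<open>x \<in> A\<close>] show "a \<in> \<Union>B"
    proof (cases rule: converse_rtranclpE)
      case base
      then show ?thesis using \<open>e \<in> B\<close> e(1) by blast
    qed blast
  qed
qed

lemma subtrees_by_edges:
  assumes g: "is_graph V E"
  shows "subtrees V E = (\<lambda>v. ({v}, {})) ` V \<union>
     (\<lambda>B. (\<Union>B, B)) ` {B \<in> Pow E. B \<noteq> {} \<and> connected_graph (\<Union>B) B \<and> \<not> has_cycle B}"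
  (is "_ = ?S \<union> ?N")
proof (intro equalityI subsetI)
  fix T assume "T \<in> subtrees V E"
  then obtain A B where T: "T = (A, B)" "A \<subseteq> V" "B \<subseteq> E" "is_tree A B"
    by (cases T) (simp add: subtrees_def)
  show "T \<in> ?S \<union> ?N"
  proof (cases "B = {}")
    case True
    then obtain v where "A = {v}" using is_tree_without_edges T(4) by blast
    then show ?thesis using T(1,2) True by (intro UnI1 image_eqI[of _ _ v]) auto
  next
    case False
    then have "A = \<Union>B" using is_tree_vertices_eq_Union[OF T(4)] by blast
    then show ?thesis using T False unfolding is_tree_def by (intro UnI2 image_eqI[of _ _ B]) auto
  qed
next
  fix T assume "T \<in> ?S \<union> ?N"
  then show "T \<in> subtrees V E"
  proof
    assume "T \<in> ?S"
    then obtain v where "v \<in> V" "T = ({v}, {})" by blast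
    then show ?thesis by (simp add: subtrees_def is_tree_singleton)
  next
    assume "T \<in> ?N"
    then obtain B where B: "T = (\<Union>B, B)" "B \<subseteq> E" "connected_graph (\<Union>B) B" "\<not> has_cycle B"
      by blast
    have "\<Union>B \<subseteq> V" using B(2) is_graph_edge_subset[OF g] by blast
    moreover have "is_graph (\<Union>B) B"
      using is_graph_Union[OF g B(2)] .
    ultimately show ?thesis using B by (simp add: subtrees_def is_tree_def)
  qed
qed

lemma Collect_mem_image_Un:
  "{x \<in> f ` A \<union> g ` B. P x} = f ` {a \<in> A. P (f a)} \<union> g ` {b \<in> B. P (g b)}"
  by blast

lemma STN_through_by_edges:
  assumes g: "is_graph V E"
  shows "STN_through V E S = card {v \<in> V. S \<subseteq> {v}} +
     card {B \<in> Pow E. B \<noteq> {} \<and> connected_graph (\<Union>B) B \<and> \<not> has_cycle B \<and> S \<subseteq> \<Union>B}"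
    (is "_ = card ?X + card ?Y")
proof -
  let ?vertex = "\<lambda>v. ({v}, {} :: 'a set set)" and ?edges = "\<lambda>B. (\<Union>B, B)"
  have "{T \<in> subtrees V E. S \<subseteq> fst T} = ?vertex ` ?X \<union> ?edges ` ?Y"
    unfolding subtrees_by_edges[OF g] Collect_mem_image_Un by simp
  then have "STN_through V E S = card (?vertex ` ?X \<union> ?edges ` ?Y)"
    by (simp add: STN_through_def)
  also have "\<dots> = card (?vertex ` ?X) + card (?edges ` ?Y)"
    using g is_graph_finite_edges[OF g] by (intro card_Un_disjoint) (auto simp: is_graph_def)
  finally have "STN_through V E S = card (?vertex ` ?X) + card (?edges ` ?Y)" .
  moreover have "inj_on ?vertex ?X" "inj_on ?edges ?Y" by (auto intro: inj_onI)
  ultimately show ?thesis by (simp add: card_image)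
qed

fun path_edges :: "'a list \<Rightarrow> 'a set set" where
  "path_edges (x # y # xs) = insert {x, y} (path_edges (y # xs))"
| "path_edges _ = {}"

lemma is_graph_path_edges: "distinct xs \<Longrightarrow> is_graph (set xs) (path_edges xs)"
proof (induction xs rule: path_edges.induct)
  case (1 x y xs)
  have "is_graph {x, y} {{x, y}}" using "1.prems" by (auto simp: is_graph_def)
  from is_graph_Un[OF this "1.IH"] "1.prems" show ?case by (simp add: insert_absorb)
qed (auto simp: is_graph_def)

lemma single_edge_acyclic: "\<not> has_cycle {{x, y}}"
proof
  assume "has_cycle {{x, y}}"
  then obtain vs where vs: "length vs \<ge> 3" "distinct vs"
    and "{vs ! 0, vs ! 1} = {x, y}" "{vs ! 1, vs ! 2} = {x, y}"
    unfolding has_cycle_def by (metis One_nat_def Suc_1 Suc_le_lessD numeral_3_eq_3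
        singletonD Suc_lessD)
  moreover have "0 < length vs" "2 < length vs" using vs(1) by auto
  ultimately show False using nth_eq_iff_index_eq[OF vs(2)] by (metis doubleton_eq_iff zero_neq_numeral)
qed

lemma path_edges_acyclic: "distinct xs \<Longrightarrow> \<not> has_cycle (path_edges xs)"
proof (induction xs rule: path_edges.induct)
  case (1 x y xs)
  have "is_graph {x, y} {{x, y}}" using "1.prems" by (auto simp: is_graph_def)
  moreover have "is_graph (set (y # xs)) (path_edges (y # xs))"
    using "1.prems" by (intro is_graph_path_edges) simp
  moreover have "{x, y} \<inter> set (y # xs) \<subseteq> {y}" using "1.prems" by auto
  ultimately show ?case
    using has_cycle_Un_cut_vertex single_edge_acyclic "1.IH" "1.prems" by fastforce
qed (simp_all add: has_cycle_def)

lemma cycle_edges_conv_image: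
  "cycle_edges xs = (\<lambda>k. {xs ! k, xs ! (Suc k mod length xs)}) ` {..<length xs}"
  unfolding cycle_edges_def by auto

lemma cycle_edges_map: "cycle_edges (map f xs) = (`) f ` cycle_edges xs"
proof -
  have "Suc k mod length xs < length xs" if "k < length xs" for k
    using that by (intro mod_less_divisor) linarith
  then show ?thesis unfolding cycle_edges_conv_image image_image by (auto intro!: image_cong)
qed

lemma is_graph_cycle_edges:
  assumes "distinct xs" and "length xs \<ge> 2"
  shows "is_graph (set xs) (cycle_edges xs)"
  unfolding is_graph_def cycle_edges_conv_image
proof (intro conjI ballI)
  fix e assume "e \<in> (\<lambda>k. {xs ! k, xs ! (Suc k mod length xs)}) ` {..<length xs}"
  then obtain k where k: "k < length xs" "e = {xs ! k, xs ! (Suc k mod length xs)}" by blast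
  moreover have "Suc k mod length xs < length xs" "Suc k mod length xs \<noteq> k"
    using k(1) assms(2) by (auto simp: mod_Suc)
  ultimately show "\<exists>u v. u \<noteq> v \<and> e = {u, v} \<and> u \<in> set xs \<and> v \<in> set xs"
    using nth_eq_iff_index_eq[OF assms(1)] by (metis nth_mem)
qed simp

lemma has_cycle_cycle_edges:
  assumes "distinct xs" and "length xs \<ge> 3"
  shows "has_cycle (cycle_edges xs)"
  unfolding has_cycle_iff_mod cycle_edges_conv_image using assms by blast

definition edge_step :: "'a set set \<Rightarrow> 'a set \<Rightarrow> 'a set" where
  "edge_step B S = S \<union> \<Union>{e \<in> B. e \<inter> S \<noteq> {}}"

lemma edge_step_iterate_reachable:
  assumes g: "is_graph V B" and "v \<in> (edge_step B ^^ n) S"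
  shows "\<exists>u\<in>S. (adj B)\<^sup>*\<^sup>* u v"
  using assms(2)
proof (induction n arbitrary: v)
  case (Suc n)
  show ?case
  proof (cases "v \<in> (edge_step B ^^ n) S")
    case False
    have "v \<in> edge_step B ((edge_step B ^^ n) S)" using Suc.prems by simp
    with False obtain e w where e: "e \<in> B" "w \<in> e" "v \<in> e" and w: "w \<in> (edge_step B ^^ n) S"
      unfolding edge_step_def[of B "(edge_step B ^^ n) S"] by blast
    moreover from e obtain x y where "e = {x, y}" using is_graph_edge[OF g] by blast
    ultimately have "adj B w v" using False by (auto simp: insert_commute)
    then show ?thesis using Suc.IH[OF w] by (meson rtranclp.rtrancl_into_rtrancl)
  qed (rule Suc.IH)
qed auto

lemma subset_edge_step_iterate: "S \<subseteq> (edge_step B ^^ n) S"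
  by (induction n) (auto simp: edge_step_def)

lemma reachable_in_edge_step_closed:
  assumes closed: "edge_step B S \<subseteq> S" and "u \<in> S" and "(adj B)\<^sup>*\<^sup>* u v"
  shows "v \<in> S"
  using assms(3)
proof (induction rule: rtranclp_induct)
  case (step y z)
  then have "z \<in> edge_step B S" by (auto simp: edge_step_def)
  then show ?case using closed by blast
qed (rule \<open>u \<in> S\<close>)

lemma connected_graph_iff_edge_step_closure:
  assumes g: "is_graph V B" and u: "u \<in> \<Union>B"
    and closed: "edge_step B ((edge_step B ^^ n) {u}) \<subseteq> (edge_step B ^^ n) {u}"
  shows "connected_graph (\<Union>B) B \<longleftrightarrow> \<Union>B \<subseteq> (edge_step B ^^ n) {u}"
proof
  assume conn: "connected_graph (\<Union>B) B"
  show "\<Union>B \<subseteq> (edge_step B ^^ n) {u}"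
  proof
    fix v assume "v \<in> \<Union>B"
    have "{u} \<subseteq> (edge_step B ^^ n) {u}" by (rule subset_edge_step_iterate)
    then have "u \<in> (edge_step B ^^ n) {u}" by simp
    moreover from conn u \<open>v \<in> \<Union>B\<close> have "(adj B)\<^sup>*\<^sup>* u v" by (rule connected_graphD)
    ultimately show "v \<in> (edge_step B ^^ n) {u}" by (rule reachable_in_edge_step_closed[OF closed])
  qed
next
  assume sub: "\<Union>B \<subseteq> (edge_step B ^^ n) {u}"
  have "(adj B)\<^sup>*\<^sup>* v u" if "v \<in> \<Union>B" for v
  proof -
    have "v \<in> (edge_step B ^^ n) {u}" using sub that by blast
    then have "\<exists>w\<in>{u}. (adj B)\<^sup>*\<^sup>* w v" by (rule edge_step_iterate_reachable[OF g])
    then have "(adj B)\<^sup>*\<^sup>* u v" by simp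
    then show ?thesis by (rule adj_rtranclp_sym)
  qed
  with u show "connected_graph (\<Union>B) B" by (rule connected_graphI_hub)
qed

section \<open>The hexagon\<close>

definition hexagon_edges :: "nat set list" where
  "hexagon_edges = [{0, 1}, {1, 2}, {2, 3}, {3, 4}, {4, 5}, {5, 0}]"

lemma cycle_edges_upt_6: "cycle_edges [0..<6] = set hexagon_edges"
  unfolding cycle_edges_conv_image hexagon_edges_def by code_simp

lemma is_graph_hexagon_edges: "is_graph {0..<6} (set hexagon_edges)"
  using is_graph_cycle_edges[of "[0..<6]"] by (simp add: cycle_edges_upt_6 atLeast0LessThan)

lemma distinct_hexagon_edges: "distinct hexagon_edges"
  unfolding hexagon_edges_def by code_simp

lemma card_Pow_filter:
  assumes "distinct xs"
  shows "card {B \<in> Pow (set xs). P B} = length (filter (\<lambda>ys. P (set ys)) (subseqs xs))"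
proof -
  have "{B \<in> Pow (set xs). P B} = set (filter P (map set (subseqs xs)))"
    using subseqs_powset[of xs] by auto
  also have "card \<dots> = length (filter P (map set (subseqs xs)))"
    using distinct_set_subseqs[OF assms] by (intro distinct_card distinct_filter)
  also have "\<dots> = length (filter (\<lambda>ys. P (set ys)) (subseqs xs))"
    by (simp add: filter_map comp_def)
  finally show ?thesis .
qed

lemma hexagon_edges_minus_edge_in_path:
  "list_all (\<lambda>e. list_ex (\<lambda>k. set hexagon_edges - {e} \<subseteq> path_edges (rotate k [0..<6])) [0..<6])
     hexagon_edges"
  unfolding hexagon_edges_def by code_simp

lemma hexagon_edge_subset_acyclic_iff:
  assumes "B \<subseteq> set hexagon_edges"
  shows "\<not> has_cycle B \<longleftrightarrow> B \<noteq> set hexagon_edges"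
proof
  show "\<not> has_cycle B" if proper: "B \<noteq> set hexagon_edges"
  proof -
    obtain e where "e \<in> set hexagon_edges" "e \<notin> B" using assms proper by blast
    moreover obtain k where "set hexagon_edges - {e} \<subseteq> path_edges (rotate k [0..<6])"
      using hexagon_edges_minus_edge_in_path \<open>e \<in> set hexagon_edges\<close>
      unfolding list_all_iff list_ex_iff by blast
    ultimately have "B \<subseteq> path_edges (rotate k [0..<6])" using assms by blast
    moreover have "\<not> has_cycle (path_edges (rotate k [0..<6::nat]))"
      by (rule path_edges_acyclic) simp
    ultimately show ?thesis using has_cycle_mono by blast
  qed
  show "B \<noteq> set hexagon_edges" if "\<not> has_cycle B"
    using that has_cycle_cycle_edges[of "[0..<6]"] by (auto simp: cycle_edges_upt_6)
qed

text \<open>Five rounds of edge_step from the least vertex already give a closed set for every edge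
  set of the hexagon, so they decide its connectivity.\<close>

lemma hexagon_edge_step_closed:
  "list_all (\<lambda>ys. ys = [] \<or>
       edge_step (set ys) ((edge_step (set ys) ^^ 5) {Min (\<Union>(set ys))}) \<subseteq>
       (edge_step (set ys) ^^ 5) {Min (\<Union>(set ys))})
     (subseqs hexagon_edges)"
  unfolding hexagon_edges_def fold_replicate[symmetric] by code_simp

lemma hexagon_edge_subset_connected_iff:
  assumes "B \<subseteq> set hexagon_edges" and "B \<noteq> {}"
  shows "connected_graph (\<Union>B) B \<longleftrightarrow> \<Union>B \<subseteq> (edge_step B ^^ 5) {Min (\<Union>B)}"
proof (rule connected_graph_iff_edge_step_closure)
  show g: "is_graph (\<Union>B) B" using is_graph_Union[OF is_graph_hexagon_edges assms(1)] .
  obtain e where "e \<in> B" using assms(2) by blast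
  with g have "\<Union>B \<noteq> {}" using is_graph_edge by fastforce
  with g show "Min (\<Union>B) \<in> \<Union>B" by (intro Min_in) (simp_all add: is_graph_def)
  obtain ys where "ys \<in> set (subseqs hexagon_edges)" "B = set ys"
    using assms(1) subseqs_powset[of hexagon_edges] by (metis Pow_iff imageE)
  then show "edge_step B ((edge_step B ^^ 5) {Min (\<Union>B)}) \<subseteq> (edge_step B ^^ 5) {Min (\<Union>B)}"
    using hexagon_edge_step_closed assms(2) by (auto simp: list_all_iff)
qed

lemma STN_through_standard_hexagon:
  "STN_through {0..<6} (set hexagon_edges) S =
     card {v \<in> {0..<6}. S \<subseteq> {v}} +
     length (filter (\<lambda>ys. set ys \<noteq> {} \<and> set ys \<noteq> set hexagon_edges \<and>
       \<Union>(set ys) \<subseteq> (edge_step (set ys) ^^ 5) {Min (\<Union>(set ys))} \<and> S \<subseteq> \<Union>(set ys))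
       (subseqs hexagon_edges))"
proof -
  have "B \<noteq> {} \<and> connected_graph (\<Union>B) B \<and> \<not> has_cycle B \<longleftrightarrow>
      B \<noteq> {} \<and> B \<noteq> set hexagon_edges \<and> \<Union>B \<subseteq> (edge_step B ^^ 5) {Min (\<Union>B)}"
    if "B \<subseteq> set hexagon_edges" for B
    using hexagon_edge_subset_acyclic_iff[OF that] hexagon_edge_subset_connected_iff[OF that] by blast
  then have "{B \<in> Pow (set hexagon_edges). B \<noteq> {} \<and> connected_graph (\<Union>B) B \<and> \<not> has_cycle B \<and> S \<subseteq> \<Union>B} =
      {B \<in> Pow (set hexagon_edges). B \<noteq> {} \<and> B \<noteq> set hexagon_edges \<and>
         \<Union>B \<subseteq> (edge_step B ^^ 5) {Min (\<Union>B)} \<and> S \<subseteq> \<Union>B}"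
    by (intro Collect_cong) (metis PowD)
  then show ?thesis
    unfolding STN_through_by_edges[OF is_graph_hexagon_edges]
    by (simp only: card_Pow_filter[OF distinct_hexagon_edges])
qed

lemma standard_hexagon_counts:
  "STN {0..<6} (set hexagon_edges) = 36"
  "STN_through {0..<6} (set hexagon_edges) {0} = 21"
  "STN_through {0..<6} (set hexagon_edges) {1} = 21"
  "STN_through {0..<6} (set hexagon_edges) {2} = 21"
  "STN_through {0..<6} (set hexagon_edges) {3} = 21"
  "STN_through {0..<6} (set hexagon_edges) {0, 1} = 16"
  "STN_through {0..<6} (set hexagon_edges) {0, 2} = 13"
  "STN_through {0..<6} (set hexagon_edges) {0, 3} = 12"
  unfolding STN_through_empty[symmetric] STN_through_standard_hexagon
  unfolding hexagon_edges_def fold_replicate[symmetric] by code_simp+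

lemma STN_through_hexagon:
  assumes "distinct h" "length h = 6" "S \<subseteq> {0..<6}"
  shows "STN_through (set h) (cycle_edges h) ((!) h ` S) = STN_through {0..<6} (set hexagon_edges) S"
proof -
  have h: "map ((!) h) [0..<6] = h" using map_nth[of h] assms(2) by simp
  have V: "set h = (!) h ` {0..<6}"
    by (metis h list.set_map set_upt)
  have E: "cycle_edges h = (`) ((!) h) ` set hexagon_edges"
    by (metis h cycle_edges_map cycle_edges_upt_6)
  have "inj_on ((!) h) {0..<6}" using assms(1,2) by (simp add: inj_on_nth)
  from STN_through_image[OF this is_graph_hexagon_edges assms(3)] show ?thesis
    unfolding V E .
qed

section \<open>Spiro chains\<close>

lemma spiro_entry_le: "d \<le> 5 \<Longrightarrow> spiro_entry d k \<le> 5 * k"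
  by (cases k) auto

lemma distinct_hexagon: "d \<le> 5 \<Longrightarrow> distinct (hexagon d k)"
  using spiro_entry_le[of d k] by (simp add: hexagon_def)

lemma length_hexagon: "length (hexagon d k) = 6"
  by (simp add: hexagon_def)

lemma spiro_V_Suc: "d \<le> 5 \<Longrightarrow> spiro_V (Suc k) = spiro_V k \<union> set (hexagon d k)"
  using spiro_entry_le[of d k] unfolding spiro_V_def hexagon_def by (intro set_eqI) (simp; presburger)

lemma spiro_V_Int_hexagon: "d \<le> 5 \<Longrightarrow> spiro_V k \<inter> set (hexagon d k) = {spiro_entry d k}"
  using spiro_entry_le[of d k] unfolding spiro_V_def hexagon_def by (intro set_eqI) (simp; presburger)

lemma spiro_E_Suc: "spiro_E d (Suc k) = spiro_E d k \<union> cycle_edges (hexagon d k)"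
  by (simp add: spiro_E_def lessThan_Suc Un_commute)

lemma is_graph_hexagon: "d \<le> 5 \<Longrightarrow> is_graph (set (hexagon d k)) (cycle_edges (hexagon d k))"
  using is_graph_cycle_edges[OF distinct_hexagon] by (simp add: length_hexagon)

lemma is_graph_spiro: "d \<le> 5 \<Longrightarrow> is_graph (spiro_V k) (spiro_E d k)"
proof (induction k)
  case 0
  then show ?case by (simp add: spiro_V_def spiro_E_def is_graph_def)
next
  case (Suc k)
  then show ?case
    unfolding spiro_V_Suc[OF Suc.prems] spiro_E_Suc by (intro is_graph_Un is_graph_hexagon)
qed

lemma one_vertex_union_spiro:
  "d \<le> 5 \<Longrightarrow> one_vertex_union (spiro_V k) (spiro_E d k)
     (set (hexagon d k)) (cycle_edges (hexagon d k)) (spiro_entry d k)"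
  by unfold_locales (simp_all add: is_graph_spiro is_graph_hexagon spiro_V_Int_hexagon)

lemma hexagon_nth_0: "hexagon d k ! 0 = spiro_entry d k"
  by (simp add: hexagon_def)

lemma hexagon_nth_exit: "d \<in> {1..5} \<Longrightarrow> hexagon d k ! d = spiro_entry d (Suc k)"
proof -
  assume "d \<in> {1..5}"
  then have "d = 1 \<or> d = 2 \<or> d = 3 \<or> d = 4 \<or> d = 5" by auto
  then show ?thesis by (elim disjE) (simp_all add: hexagon_def)
qed

lemma spiro_hexagon_counts:
  assumes "d \<in> {1, 2, 3}"
  shows "STN (set (hexagon d k)) (cycle_edges (hexagon d k)) = 36"
    and "STN_through (set (hexagon d k)) (cycle_edges (hexagon d k)) {spiro_entry d k} = 21"
    and "STN_through (set (hexagon d k)) (cycle_edges (hexagon d k)) {spiro_entry d (Suc k)} = 21"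
    and "STN_through (set (hexagon d k)) (cycle_edges (hexagon d k))
           {spiro_entry d k, spiro_entry d (Suc k)} = STN_through {0..<6} (set hexagon_edges) {0, d}"
proof -
  have "d \<le> 5" using assms by auto
  have hexagon: "STN_through (set (hexagon d k)) (cycle_edges (hexagon d k)) ((!) (hexagon d k) ` S) =
      STN_through {0..<6} (set hexagon_edges) S" if "S \<subseteq> {0..<6}" for S
    using distinct_hexagon[OF \<open>d \<le> 5\<close>] length_hexagon that by (rule STN_through_hexagon)
  have exit: "hexagon d k ! d = spiro_entry d (Suc k)" using assms by (intro hexagon_nth_exit) auto
  show "STN (set (hexagon d k)) (cycle_edges (hexagon d k)) = 36"
    using hexagon[of "{}"] by (simp add: STN_through_empty standard_hexagon_counts)
  show "STN_through (set (hexagon d k)) (cycle_edges (hexagon d k)) {spiro_entry d k} = 21"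
    using hexagon[of "{0}"] by (simp add: hexagon_nth_0 standard_hexagon_counts)
  have "STN_through (set (hexagon d k)) (cycle_edges (hexagon d k)) {spiro_entry d (Suc k)} =
      STN_through {0..<6} (set hexagon_edges) {d}"
    using hexagon[of "{d}"] exit assms by auto
  also have "\<dots> = 21"
    using assms standard_hexagon_counts by (elim insertE) auto
  finally show "STN_through (set (hexagon d k)) (cycle_edges (hexagon d k)) {spiro_entry d (Suc k)} = 21" .
  show "STN_through (set (hexagon d k)) (cycle_edges (hexagon d k))
      {spiro_entry d k, spiro_entry d (Suc k)} = STN_through {0..<6} (set hexagon_edges) {0, d}"
    using hexagon[of "{0, d}"] exit assms by (auto simp: hexagon_nth_0)
qed

lemma STN_spiro_Suc:
  assumes "d \<in> {1, 2, 3}"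
  shows "STN (spiro_V (Suc k)) (spiro_E d (Suc k)) + STN_through (spiro_V k) (spiro_E d k) {spiro_entry d k} + 21 =
    STN (spiro_V k) (spiro_E d k) + 36 + 21 * STN_through (spiro_V k) (spiro_E d k) {spiro_entry d k}"
proof -
  have "d \<le> 5" using assms by auto
  interpret one_vertex_union "spiro_V k" "spiro_E d k" "set (hexagon d k)" "cycle_edges (hexagon d k)"
    "spiro_entry d k"
    using \<open>d \<le> 5\<close> by (rule one_vertex_union_spiro)
  show ?thesis
    using STN_Un spiro_hexagon_counts(1,2)[OF assms]
    unfolding spiro_V_Suc[OF \<open>d \<le> 5\<close>] spiro_E_Suc by simp
qed

lemma STN_through_spiro_Suc:
  assumes "d \<in> {1, 2, 3}"
  shows "STN_through (spiro_V (Suc k)) (spiro_E d (Suc k)) {spiro_entry d (Suc k)} +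
      STN_through {0..<6} (set hexagon_edges) {0, d} =
    21 + STN_through {0..<6} (set hexagon_edges) {0, d} *
      STN_through (spiro_V k) (spiro_E d k) {spiro_entry d k}"
proof -
  have "d \<le> 5" using assms by auto
  interpret one_vertex_union "spiro_V k" "spiro_E d k" "set (hexagon d k)" "cycle_edges (hexagon d k)"
    "spiro_entry d k"
    using \<open>d \<le> 5\<close> by (rule one_vertex_union_spiro)
  have "spiro_entry d (Suc k) \<in> set (hexagon d k)" "spiro_entry d (Suc k) \<noteq> spiro_entry d k"
    using assms spiro_entry_le[of d k] by (auto simp: hexagon_def)
  from STN_through_Un[OF this] show ?thesis
    using spiro_hexagon_counts(3,4)[OF assms]
    unfolding spiro_V_Suc[OF \<open>d \<le> 5\<close>] spiro_E_Suc by simp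
qed

lemma hexagon_chain_recurrence_solution:
  fixes a f :: "nat \<Rightarrow> real" and g :: real
  assumes "g \<noteq> 1" and "a 0 = 1" and "f 0 = 1"
    and f_Suc: "\<And>k. f (Suc k) = 21 - g + g * f k"
    and a_Suc: "\<And>k. a (Suc k) = a k + 15 + 20 * f k"
  shows "a n = 1 + 15 * real n + 20 * (g - 21) * real n / (g - 1) + 400 * (g ^ n - 1) / (g - 1)\<^sup>2"
proof -
  have f: "(g - 1) * f k = 20 * g ^ k + g - 21" for k
    by (induction k) (simp_all add: assms(3) f_Suc algebra_simps)
  have closed: "(g - 1)\<^sup>2 * a n =
      (g - 1)\<^sup>2 * (1 + 15 * real n) + 20 * (g - 21) * (g - 1) * real n + 400 * (g ^ n - 1)"
  proof (induction n)
    case (Suc n)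
    have "(g - 1)\<^sup>2 * a (Suc n) = (g - 1)\<^sup>2 * a n + 15 * (g - 1)\<^sup>2 + 20 * (g - 1) * ((g - 1) * f n)"
      by (simp add: a_Suc algebra_simps power2_eq_square)
    also have "\<dots> = (g - 1)\<^sup>2 * (1 + 15 * real (Suc n)) + 20 * (g - 21) * (g - 1) * real (Suc n) +
        400 * (g ^ Suc n - 1)"
      unfolding Suc.IH f by (simp add: algebra_simps power2_eq_square)
    finally show ?case .
  qed (simp add: assms(2))
  have "g - 1 \<noteq> 0" using assms(1) by simp
  then have "a n = ((g - 1)\<^sup>2 * (1 + 15 * real n) + 20 * (g - 21) * (g - 1) * real n +
      400 * (g ^ n - 1)) / (g - 1)\<^sup>2"
    using closed by (simp add: eq_divide_eq mult.commute)
  also have "\<dots> = 1 + 15 * real n + 20 * (g - 21) * real n / (g - 1) + 400 * (g ^ n - 1) / (g - 1)\<^sup>2"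
    using \<open>g - 1 \<noteq> 0\<close> by (simp add: add_divide_distrib power2_eq_square)
  finally show ?thesis .
qed

lemma STN_spiro_chain:
  assumes "d \<in> {1, 2, 3}"
  defines "g \<equiv> real (STN_through {0..<6} (set hexagon_edges) {0, d})"
  shows "real (STN (spiro_V n) (spiro_E d n)) =
    1 + 15 * real n + 20 * (g - 21) * real n / (g - 1) + 400 * (g ^ n - 1) / (g - 1)\<^sup>2"
proof (rule hexagon_chain_recurrence_solution)
  show "g \<noteq> 1" using assms(1) standard_hexagon_counts unfolding g_def by (elim insertE) auto
  have base: "STN_through (spiro_V 0) (spiro_E d 0) S = 1" if "S \<subseteq> {0}" for S
    using that by (auto simp: spiro_V_def spiro_E_def STN_through_by_edges is_graph_def
        subset_singleton_iff)
  show "real (STN (spiro_V 0) (spiro_E d 0)) = 1"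
    using base[of "{}"] by (simp add: STN_through_empty)
  show "real (STN_through (spiro_V 0) (spiro_E d 0) {spiro_entry d 0}) = 1"
    using base[of "{0}"] by simp
  show "real (STN_through (spiro_V (Suc k)) (spiro_E d (Suc k)) {spiro_entry d (Suc k)}) =
      21 - g + g * real (STN_through (spiro_V k) (spiro_E d k) {spiro_entry d k})" for k
    using arg_cong[OF STN_through_spiro_Suc[OF assms(1), of k], of real] unfolding g_def by simp
  show "real (STN (spiro_V (Suc k)) (spiro_E d (Suc k))) = real (STN (spiro_V k) (spiro_E d k)) + 15 +
      20 * real (STN_through (spiro_V k) (spiro_E d k) {spiro_entry d k})" for k
    using arg_cong[OF STN_spiro_Suc[OF assms(1), of k], of real] by simp
qed

theorem corollary3:
  fixes n :: nat
  assumes "n \<ge> 1"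
  shows "real (STN (spiro_V n) (spiro_E 1 n))
           = 256 * (16 ^ (n - 1) - 1) / 9 + 25 * real (n - 1) / 3 + 36 \<and>
         real (STN (spiro_V n) (spiro_E 2 n))
           = 325 * (13 ^ (n - 1) - 1) / 9 + 5 * real (n - 1) / 3 + 36 \<and>
         real (STN (spiro_V n) (spiro_E 3 n))
           = 4800 * (12 ^ (n - 1) - 1) / 121 - 15 * real (n - 1) / 11 + 36"
proof -
  obtain m where n: "n = Suc m" using assms by (cases n) auto
  show ?thesis
    using STN_spiro_chain[of 1 n] STN_spiro_chain[of 2 n] STN_spiro_chain[of 3 n]
    unfolding n standard_hexagon_counts by (simp add: field_simps)
qed

end
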